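(* Consider Algorithm GEN with parameter $t_0$ on an instance satisfying the standing assumption, with an edge labeling as in the context. For each edge $(i,u)$, let $q_{i,u}(t)$ be the probability that $(i,u)$ has been matched by time $t$. Then for every $t\in[0,1]$: - for every first-class-labeled edge $(i,u)$, we have $q_{i,u}(t)/x_{iu}=q_1(t)/(1-\ln 2)$; - for every second-class-labeled edge $(i,u)$, we have $q_{i,u}(t)/x_{iu}=q_2(t)/\ln 2$.
   Context: **Model.** Poisson arrival model. Each online type $i$ independently arrives according to a Poisson process of rate $\lambda_i$ on $[0,1]$. On arrival, a vertex is immediately and irrevocably matched to an unmatched offline neighbor or discarded. Each offline vertex is matched at most once. The instance is a bipartite graph $(I,J,E)$ with rates $\lambda_i>0$. **Standing assumption.** There are values $x_{ij}\ge0$ (an optimal Jaillet–Lu LP solution) with $\sum_i x_{ij}=1$ for all $j$, and each type is one of two kinds: - first-class: one neighbor $j$, with $x_{ij}=\lambda_i$; - second-class: two neighbors $j_1,j_2$, with $x_{ij_1}=x_{ij_2}=\lambda_i/2$. **Labeling.** Each edge is labeled first-class or second-class. Edges of first-class types are labeled first-class. For every $j$, the first-class-labeled edges at $j$ have total $x$-value $1-\ln2$. **Reference process.** $H$ has offline vertices $a,b$; a type of rate $2\ln2$ adjacent to both; and types of rate $1-\ln2$ adjacent only to $a$, resp. only to $b$. Algorithm RES with parameter $t_0$ works as follows: - single-neighbor arrivals are matched if their neighbor is unmatched; - a two-neighbor arrival at time $t>t_0$ with an unmatched neighbor is matched to a uniformly random unmatched neighbor. On $H$ under RES: - $f(t)$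 is the probability that a given offline vertex is matched by time $t$; - $g(t)$ is the probability that both are, and $\bar g=1-g$; - $q_1(t)$ is the probability that a particular single-neighbor edge has been matched by time $t$; - $q_2(t)$ is the same for a particular edge of the two-neighbor type. **Algorithm GEN (parameter $t_0$).** Under GEN, $g_{u,v}(t)$ is the probability that both $u$ and $v$ are matched by time $t$, and $\bar g_{u,v}=1-g_{u,v}$. Edges are used only if their offline endpoint is unmatched. - A first-class arrival is matched to its neighbor if possible. - A second-class arrival of type $i$ with neighbors $u,v$ chooses at most one edge, with disjoint probabilities: - each first-class-labeled edge $(i,u)$ with probability $1/2$; - if the arrival time is $t>t_0$, each second-class-labeled edge $(i,u)$ with probability $\bar g(t)/(2\bar g_{u,v}(t))$ if $v$ is unmatched, or $\bar g(t)/\bar g_{u,v}(t)$ if $v$ is matched. *)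

theory Defs
  imports "HOL-Analysis.Analysis"
begin

(* A state records, for each offline vertex u, the online type that matched it (Some i),
   or None if u is still unmatched. *)
type_synonym ('i,'j) mstate = "'j \<Rightarrow> 'i option"

definition nbrs :: "('i \<times> 'j) set \<Rightarrow> 'i \<Rightarrow> 'j set" where
  "nbrs E i = {j. (i, j) \<in> E}"

(* Net probability flow into state \<sigma> at time s, where r s \<sigma> i u is the rate at which
   edge (i,u) gets matched in state \<sigma> (u unmatched): arrival rate of type i times the
   probability that an arrival of type i chooses edge (i,u). *)
definition flow ::
  "('i \<times> 'j::finite) set \<Rightarrow> (real \<Rightarrow> ('i,'j) mstate \<Rightarrow> 'i \<Rightarrow> 'j \<Rightarrow> real)
   \<Rightarrow> (real \<Rightarrow> ('i,'j) mstate \<Rightarrow> real) \<Rightarrow> real \<Rightarrow> ('i,'j) mstate \<Rightarrow> real" where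
  "flow E r p s \<sigma> =
     (\<Sum>u\<in>{u. \<sigma> u \<noteq> None}.
        if (the (\<sigma> u), u) \<in> E
        then p s (\<sigma>(u := None)) * r s (\<sigma>(u := None)) (the (\<sigma> u)) u else 0)
     - p s \<sigma> * (\<Sum>e\<in>{e\<in>E. \<sigma> (snd e) = None}. r s \<sigma> (fst e) (snd e))"

(* p t \<sigma> is the law (at time t) of the state of the continuous-time Markov chain driven by
   independent Poisson arrivals, characterised by the Kolmogorov forward equations in
   integral form, starting from the empty matching. *)
definition matched_law ::
  "('i \<times> 'j::finite) set \<Rightarrow> (real \<Rightarrow> ('i,'j) mstate \<Rightarrow> 'i \<Rightarrow> 'j \<Rightarrow> real)
   \<Rightarrow> (real \<Rightarrow> ('i,'j) mstate \<Rightarrow> real) \<Rightarrow> bool" where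
  "matched_law E r p \<longleftrightarrow>
     (\<forall>\<sigma>. p 0 \<sigma> = (if \<sigma> = (\<lambda>_. None) then 1 else 0)) \<and>
     (\<forall>t\<in>{0..1}. \<forall>\<sigma>. ((\<lambda>s. flow E r p s \<sigma>) has_integral (p t \<sigma> - p 0 \<sigma>)) {0..t})"

definition qedge :: "(real \<Rightarrow> ('i,'j::finite) mstate \<Rightarrow> real) \<Rightarrow> 'i \<Rightarrow> 'j \<Rightarrow> real \<Rightarrow> real" where
  "qedge p i u t = (\<Sum>\<sigma>\<in>{\<sigma>. \<sigma> u = Some i}. p t \<sigma>)"

definition gboth :: "(real \<Rightarrow> ('i::finite,'j::finite) mstate \<Rightarrow> real) \<Rightarrow> 'j \<Rightarrow> 'j \<Rightarrow> real \<Rightarrow> real" where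
  "gboth p u v t = (\<Sum>\<sigma>\<in>{\<sigma>. \<sigma> u \<noteq> None \<and> \<sigma> v \<noteq> None}. p t \<sigma>)"

definition res_rate :: "('i \<times> 'j) set \<Rightarrow> ('i \<Rightarrow> real) \<Rightarrow> real
    \<Rightarrow> real \<Rightarrow> ('i,'j) mstate \<Rightarrow> 'i \<Rightarrow> 'j \<Rightarrow> real" where
  "res_rate E lam t0 s \<sigma> i u =
     (if card (nbrs E i) = 1 then lam i
      else if t0 < s then lam i / real (card {v\<in>nbrs E i. \<sigma> v = None})
      else 0)"

definition other :: "('i \<times> 'j) set \<Rightarrow> 'i \<Rightarrow> 'j \<Rightarrow> 'j" where
  "other E i u = (THE v. (i, v) \<in> E \<and> v \<noteq> u)"

(* Algorithm GEN; fcl e = True iff edge e is labeled first-class; gbar = 1 - g of the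
   reference process; p is GEN's own law (used for g_{u,v}). *)
definition gen_rate :: "('i::finite \<times> 'j::finite) set \<Rightarrow> ('i \<Rightarrow> real) \<Rightarrow> ('i \<times> 'j \<Rightarrow> bool)
    \<Rightarrow> real \<Rightarrow> (real \<Rightarrow> real) \<Rightarrow> (real \<Rightarrow> ('i,'j) mstate \<Rightarrow> real)
    \<Rightarrow> real \<Rightarrow> ('i,'j) mstate \<Rightarrow> 'i \<Rightarrow> 'j \<Rightarrow> real" where
  "gen_rate E lam fcl t0 gbar p s \<sigma> i u =
     (if card (nbrs E i) = 1 then lam i
      else if fcl (i, u) then lam i / 2
      else if t0 < s then
        (let v = other E i u; gbuv = 1 - gboth p u v s in
          if \<sigma> v = None then lam i * (gbar s / (2 * gbuv))
          else lam i * (gbar s / gbuv))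
      else 0)"

datatype hoff = HA | HB
datatype htype = HC | HSA | HSB

instance hoff :: finite
proof
  have "(UNIV :: hoff set) = {HA, HB}" using hoff.exhaust by auto
  then show "finite (UNIV :: hoff set)" by (metis finite.emptyI finite_insert)
qed

instance htype :: finite
proof
  have "(UNIV :: htype set) = {HC, HSA, HSB}" using htype.exhaust by auto
  then show "finite (UNIV :: htype set)" by (metis finite.emptyI finite_insert)
qed

definition H_E :: "(htype \<times> hoff) set" where
  "H_E = {(HC, HA), (HC, HB), (HSA, HA), (HSB, HB)}"

definition H_lam :: "htype \<Rightarrow> real" where
  "H_lam i = (case i of HC \<Rightarrow> 2 * ln 2 | HSA \<Rightarrow> 1 - ln 2 | HSB \<Rightarrow> 1 - ln 2)"

definition H_g :: "(real \<Rightarrow> (htype,hoff) mstate \<Rightarrow> real) \<Rightarrow> real \<Rightarrow> real" where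
  "H_g pH t = gboth pH HA HB t"

definition H_q1 :: "(real \<Rightarrow> (htype,hoff) mstate \<Rightarrow> real) \<Rightarrow> real \<Rightarrow> real" where
  "H_q1 pH t = qedge pH HSA HA t"

definition H_q2 :: "(real \<Rightarrow> (htype,hoff) mstate \<Rightarrow> real) \<Rightarrow> real \<Rightarrow> real" where
  "H_q2 pH t = qedge pH HC HA t"

end

theory Submission
  imports Defs
begin

(* Everything is read off from the integrated forward equations. Writing F_w for the probability
   that the offline vertex w is matched, a first-class edge (i,u) of GEN is matched at rate
   x_iu (1 - F_u), and a second-class edge at rate x_iu gbar (1 + (F_v - F_u) / (1 - g_uv)).
   Since the first-class x-mass at every vertex is 1 - ln 2, the F_u obey, up to these
   correction terms, the integral equation of the matching probability f of a vertex of H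
   (where f_a = f_b by symmetry), and a Gronwall argument gives F_u = f for all u. This needs the
   law of GEN to stay nonnegative and g_uv < 1, which is propagated along [0,1] by real
   induction. Afterwards the rate of every edge is x_iu / (1 - ln 2) resp. x_iu / ln 2 times
   the rate of the corresponding edge of H. *)

section \<open>Real induction and Gronwall's inequality\<close>

lemma real_induct_Icc:
  fixes T :: real
  assumes step: "\<And>t. t \<in> {0..T} \<Longrightarrow> \<forall>s\<in>{0..<t}. P s \<Longrightarrow> \<exists>e>0. \<forall>s\<in>{0..T}. s < t + e \<longrightarrow> P s"
  shows "\<forall>s\<in>{0..T}. P s"
proof (rule ccontr)
  assume "\<not> (\<forall>s\<in>{0..T}. P s)"
  define B where "B = {s\<in>{0..T}. \<not> P s}"
  have "B \<noteq> {}" using \<open>\<not> (\<forall>s\<in>{0..T}. P s)\<close> by (auto simp: B_def)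
  moreover have bdd: "bdd_below B" unfolding B_def by (rule bdd_belowI[of _ 0]) auto
  ultimately have inf_in: "0 \<le> Inf B" "Inf B \<le> T"
    by (auto intro!: cInf_greatest order_trans[OF cInf_lower] simp: B_def)
  have "\<forall>s\<in>{0..<Inf B}. P s"
  proof
    fix s assume s: "s \<in> {0..<Inf B}"
    show "P s"
    proof (rule ccontr)
      assume "\<not> P s"
      then have "s \<in> B" using s inf_in by (auto simp: B_def)
      then show False using cInf_lower[OF _ bdd, of s] s by auto
    qed
  qed
  then have "\<exists>e>0. \<forall>s\<in>{0..T}. s < Inf B + e \<longrightarrow> P s"
    using step inf_in by simp
  then obtain e where e: "e > 0" "\<forall>s\<in>{0..T}. s < Inf B + e \<longrightarrow> P s" by blast
  have "Inf B + e \<le> Inf B"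
    using \<open>B \<noteq> {}\<close> e(2) by (intro cInf_greatest) (force simp: B_def)+
  with e(1) show False by simp
qed

lemma continuous_on_le_from_left:
  fixes g :: "real \<Rightarrow> real"
  assumes "continuous_on {0..t} g" "0 < t" "\<forall>s\<in>{0..<t}. g s \<le> c"
  shows "g t \<le> c"
  using continuous_le_on_closure[of "{0..<t}" g t c] assms by auto

lemma integral_gronwall_zero_step:
  fixes M :: "real \<Rightarrow> real"
  assumes cont: "continuous_on {0..T} M" and nonneg: "\<forall>t\<in>{0..T}. 0 \<le> M t" and "0 \<le> C"
    and bound: "\<forall>t\<in>{0..T}. M t \<le> C * integral {0..t} M"
    and t: "t \<in> {0..T}" and zero_upto_t: "\<forall>s\<in>{0..t}. M s = 0"
  shows "\<forall>y\<in>{t..min T (t + 1 / (2 * C + 2))}. M y = 0"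
proof -
  \<comment> \<open>on this window the maximum m of M satisfies M m \<le> C (m - t) M m \<le> M m / 2\<close>
  define e where "e = 1 / (2 * C + 2)"
  have e: "e > 0" "C * e \<le> 1/2" using \<open>0 \<le> C\<close> by (auto simp: e_def field_simps)
  define b where "b = min T (t + e)"
  have tb: "t \<le> b" using t e by (auto simp: b_def)
  have cont_tb: "continuous_on {t..b} M" using cont by (rule continuous_on_subset) (use t in \<open>auto simp: b_def\<close>)
  obtain m where m: "m \<in> {t..b}" "\<forall>y\<in>{t..b}. M y \<le> M m"
    using continuous_attains_sup[OF compact_Icc _ cont_tb] tb by auto
  have M_m_nonneg: "0 \<le> M m" using nonneg m t by (auto simp: b_def)
  have "integral {0..m} M = integral {0..t} M + integral {t..m} M"
    using m t by (intro Henstock_Kurzweil_Integration.integral_combine[symmetric]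
        integrable_continuous_interval continuous_on_subset[OF cont]) (auto simp: b_def)
  also have "integral {0..t} M = 0" using integral_cong[of "{0..t}" M "\<lambda>_. 0"] zero_upto_t by simp
  also have "integral {t..m} M \<le> integral {t..m} (\<lambda>_. M m)"
    using cont_tb m by (intro integral_le) (auto intro!: integrable_continuous_interval elim!: continuous_on_subset)
  also have "\<dots> = (m - t) * M m" using m by simp
  also have "\<dots> \<le> e * M m" using m M_m_nonneg by (intro mult_right_mono) (auto simp: b_def)
  finally have integral_le: "integral {0..m} M \<le> e * M m" by simp
  have "M m \<le> C * integral {0..m} M" using bound m t by (auto simp: b_def)
  also have "\<dots> \<le> C * (e * M m)" using integral_le \<open>0 \<le> C\<close> by (rule mult_left_mono)
  also have "\<dots> \<le> M m / 2"
    using mult_right_mono[OF e(2) M_m_nonneg] by (simp add: mult.assoc[symmetric])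
  finally have "M m \<le> 0" by simp
  show ?thesis
  proof
    fix y assume y: "y \<in> {t..min T (t + 1 / (2 * C + 2))}"
    then have "0 \<le> M y" "M y \<le> M m" using nonneg t m by (auto simp: b_def e_def)
    with \<open>M m \<le> 0\<close> show "M y = 0" by simp
  qed
qed

lemma integral_gronwall_zero:
  fixes M :: "real \<Rightarrow> real"
  assumes cont: "continuous_on {0..T} M" and nonneg: "\<forall>t\<in>{0..T}. 0 \<le> M t" and "0 \<le> C"
    and bound: "\<forall>t\<in>{0..T}. M t \<le> C * integral {0..t} M"
  shows "\<forall>t\<in>{0..T}. M t = 0"
proof (rule real_induct_Icc)
  fix t assume t: "t \<in> {0..T}" and below: "\<forall>s\<in>{0..<t}. M s = 0"
  have "M t \<le> 0"
  proof (cases "t = 0")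
    case True
    then show ?thesis using bound[rule_format, of 0] t by simp
  next
    case False
    then show ?thesis using t below
      by (intro continuous_on_le_from_left continuous_on_subset[OF cont]) auto
  qed
  with nonneg t have "\<forall>s\<in>{0..t}. M s = 0" using below by fastforce
  then have "\<forall>y\<in>{t..min T (t + 1 / (2 * C + 2))}. M y = 0"
    by (rule integral_gronwall_zero_step[OF assms t])
  moreover have "0 < 1 / (2 * C + 2)" using \<open>0 \<le> C\<close> by simp
  ultimately show "\<exists>e>0. \<forall>s\<in>{0..T}. s < t + e \<longrightarrow> M s = 0"
    using below by (intro exI[of _ "1 / (2 * C + 2)"]) (auto simp: not_less)
qed

lemma pos_if_decay_rate_bounded:
  fixes y \<rho> :: "real \<Rightarrow> real"
  assumes cont: "continuous_on {0..1} y" and "y 0 = 1"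
    and decay: "\<And>a b. 0 \<le> a \<Longrightarrow> a \<le> b \<Longrightarrow> b \<le> 1 \<Longrightarrow> (\<rho> has_integral (y a - y b)) {a..b}"
    and rate_nonneg: "\<forall>s\<in>{0..1}. 0 \<le> \<rho> s" and rate_le: "\<forall>s\<in>{0..1}. \<rho> s \<le> K * y s" and "0 \<le> K"
  shows "\<forall>t\<in>{0..1}. 0 < y t"
proof (rule ccontr)
  assume "\<not> (\<forall>t\<in>{0..1}. 0 < y t)"
  then obtain t1 where t1: "t1 \<in> {0..1}" "y t1 \<le> 0" by auto
  define Z where "Z = {0..t1} \<inter> y -` {..0}"
  have "closed Z" unfolding Z_def
    by (rule continuous_closed_preimage) (use cont t1 in \<open>auto elim!: continuous_on_subset\<close>)
  moreover have "t1 \<in> Z" using t1 by (auto simp: Z_def)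
  moreover have bdd: "bdd_below Z" unfolding Z_def by (rule bdd_belowI[of _ 0]) auto
  ultimately have "Inf Z \<in> Z" by (intro closed_contains_Inf) auto
  define \<tau> where "\<tau> = Inf Z"
  have \<tau>: "0 \<le> \<tau>" "\<tau> \<le> t1" "y \<tau> \<le> 0" using \<open>Inf Z \<in> Z\<close> by (auto simp: Z_def \<tau>_def)
  have pos_before: "0 < y s" if "0 \<le> s" "s < \<tau>" for s
    using cInf_lower[OF _ bdd, of s] that \<tau> by (force simp: Z_def \<tau>_def)
  have "0 < \<tau>" using \<tau> \<open>y 0 = 1\<close> by (cases "\<tau> = 0") auto
  define a where "a = max 0 (\<tau> - 1 / (2 * K + 2))"
  have a: "0 \<le> a" "a < \<tau>" "\<tau> - a \<le> 1 / (2 * K + 2)" using \<open>0 < \<tau>\<close> \<open>0 \<le> K\<close> by (auto simp: a_def)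
  have ya: "0 < y a" using pos_before a by auto
  have y_le_ya: "y s \<le> y a" if "a \<le> s" "s \<le> \<tau>" for s
    using has_integral_nonneg[OF decay[of a s]] rate_nonneg a that \<tau> t1 by auto
  \<comment> \<open>on [a, \<tau>] the function y loses at most (\<tau> - a) K y a \<le> y a / 2, so it cannot reach 0 at \<tau>\<close>
  have "(\<rho> has_integral (y a - y \<tau>)) {a..\<tau>}" using decay a \<tau> t1 by auto
  moreover have "((\<lambda>_. K * y a) has_integral ((\<tau> - a) * (K * y a))) {a..\<tau>}"
    using has_integral_const_real[of "K * y a" a \<tau>] a by simp
  ultimately have "y a - y \<tau> \<le> (\<tau> - a) * (K * y a)"
  proof (rule has_integral_le)
    fix s assume s: "s \<in> {a..\<tau>}"
    have "\<rho> s \<le> K * y s" using rate_le s a \<tau> t1 by auto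
    also have "\<dots> \<le> K * y a" using y_le_ya s \<open>0 \<le> K\<close> by (auto intro: mult_left_mono)
    finally show "\<rho> s \<le> K * y a" .
  qed
  also have "\<dots> \<le> (1 / (2 * K + 2)) * (K * y a)"
    using a \<open>0 \<le> K\<close> ya by (intro mult_right_mono) auto
  also have "\<dots> \<le> y a / 2" using \<open>0 \<le> K\<close> ya by (simp add: field_simps)
  finally show False using ya \<tau> by simp
qed

lemma nonneg_if_rate_nonneg_while_negative:
  fixes y \<rho> :: "real \<Rightarrow> real"
  assumes cont: "continuous_on {0..T} y" and "0 \<le> y 0"
    and growth: "\<And>a b. 0 \<le> a \<Longrightarrow> a \<le> b \<Longrightarrow> b \<le> T \<Longrightarrow> (\<rho> has_integral (y b - y a)) {a..b}"
    and rate_nonneg: "\<And>s. s \<in> {0..T} \<Longrightarrow> y s < 0 \<Longrightarrow> 0 \<le> \<rho> s"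
  shows "\<forall>t\<in>{0..T}. 0 \<le> y t"
proof (rule ccontr)
  assume "\<not> (\<forall>t\<in>{0..T}. 0 \<le> y t)"
  then obtain t1 where t1: "t1 \<in> {0..T}" "y t1 < 0" by auto
  define Z where "Z = {0..t1} \<inter> y -` {0..}"
  have "closed Z" unfolding Z_def
    by (rule continuous_closed_preimage) (use cont t1 in \<open>auto elim!: continuous_on_subset\<close>)
  moreover have "0 \<in> Z" using \<open>0 \<le> y 0\<close> t1 by (auto simp: Z_def)
  moreover have bdd: "bdd_above Z" unfolding Z_def by (rule bdd_aboveI[of _ t1]) auto
  ultimately have "Sup Z \<in> Z" by (intro closed_contains_Sup) auto
  define ts where "ts = Sup Z"
  have ts: "0 \<le> ts" "ts \<le> t1" "0 \<le> y ts" using \<open>Sup Z \<in> Z\<close> by (auto simp: Z_def ts_def)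
  have neg_after: "y s < 0" if "s \<in> {ts<..t1}" for s
  proof (rule ccontr)
    assume "\<not> y s < 0"
    then have "s \<in> Z" using that ts by (auto simp: Z_def)
    then show False using cSup_upper[OF _ bdd, of s] that by (auto simp: ts_def)
  qed
  have "(\<rho> has_integral (y t1 - y ts)) {ts..t1}" using ts t1 by (intro growth) auto
  then have "((\<lambda>s. if s = ts then 0 else \<rho> s) has_integral (y t1 - y ts)) {ts..t1}"
    by (rule has_integral_spike[OF negligible_sing, rotated]) auto
  then have "0 \<le> y t1 - y ts"
  proof (rule has_integral_nonneg)
    fix s assume s: "s \<in> {ts..t1}"
    show "0 \<le> (if s = ts then 0 else \<rho> s)"
      using rate_nonneg[of s] neg_after[of s] s ts t1 by (cases "s = ts") auto
  qed
  then show False using ts t1 by simp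
qed

section \<open>Forward equations of the matching process\<close>

lemma matched_law_initial:
  "matched_law E r p \<Longrightarrow> p 0 \<sigma> = (if \<sigma> = (\<lambda>_. None) then 1 else 0)"
  unfolding matched_law_def by blast

lemma matched_law_has_integral:
  assumes law: "matched_law E r p" and "0 \<le> a" "a \<le> b" "b \<le> 1"
  shows "((\<lambda>s. flow E r p s \<sigma>) has_integral (p b \<sigma> - p a \<sigma>)) {a..b}"
proof -
  have from_0: "((\<lambda>s. flow E r p s \<sigma>) has_integral (p t \<sigma> - p 0 \<sigma>)) {0..t}" if "t \<in> {0..1}" for t
    using law that unfolding matched_law_def by blast
  have "(\<lambda>s. flow E r p s \<sigma>) integrable_on {0..b}"
    using from_0[of b] assms by (auto intro: has_integral_integrable)
  then have "integral {0..a} (\<lambda>s. flow E r p s \<sigma>) + integral {a..b} (\<lambda>s. flow E r p s \<sigma>)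
        = integral {0..b} (\<lambda>s. flow E r p s \<sigma>)"
    and "(\<lambda>s. flow E r p s \<sigma>) integrable_on {a..b}"
    using assms by (auto intro: Henstock_Kurzweil_Integration.integral_combine integrable_on_subinterval)
  then show ?thesis
    using integral_unique[OF from_0] assms by (simp add: has_integral_iff)
qed

lemma matched_law_continuous:
  assumes law: "matched_law E r p"
  shows "continuous_on {0..1} (\<lambda>t. p t \<sigma>)"
proof -
  have "(\<lambda>s. flow E r p s \<sigma>) integrable_on {0..1}"
    by (intro has_integral_integrable[OF matched_law_has_integral[OF law]]) auto
  then have "continuous_on {0..1} (\<lambda>t. p 0 \<sigma> + integral {0..t} (\<lambda>s. flow E r p s \<sigma>))"
    by (intro continuous_intros indefinite_integral_continuous_1)
  moreover have "p 0 \<sigma> + integral {0..t} (\<lambda>s. flow E r p s \<sigma>) = p t \<sigma>" if "t \<in> {0..1}" for t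
    using integral_unique[OF matched_law_has_integral[OF law, of 0 t]] that by simp
  ultimately show ?thesis by (rule continuous_on_eq)
qed

lemma sum_flow_transitions:
  fixes E :: "('i::finite \<times> 'j::finite) set"
  shows "(\<Sum>\<sigma>\<in>S. flow E r p s \<sigma>) =
    (\<Sum>\<sigma>\<in>UNIV. \<Sum>e\<in>{e\<in>E. \<sigma> (snd e) = None}.
       (of_bool (\<sigma>(snd e := Some (fst e)) \<in> S) - of_bool (\<sigma> \<in> S)) * (p s \<sigma> * r s \<sigma> (fst e) (snd e)))"
proof -
  let ?w = "\<lambda>\<sigma> e. p s \<sigma> * r s \<sigma> (fst e) (snd e)"
  let ?G = "\<lambda>\<sigma> u. p s (\<sigma>(u := None)) * r s (\<sigma>(u := None)) (the (\<sigma> u)) u"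
  \<comment> \<open>the inflow into \<sigma> through u comes from \<sigma>(u := None) along the edge (the (\<sigma> u), u)\<close>
  have "(\<Sum>\<sigma>\<in>S. \<Sum>u\<in>{u. \<sigma> u \<noteq> None}. if (the (\<sigma> u), u) \<in> E then ?G \<sigma> u else 0)
      = (\<Sum>(\<sigma>, u)\<in>Sigma S (\<lambda>\<sigma>. {u. \<sigma> u \<noteq> None \<and> (the (\<sigma> u), u) \<in> E}). ?G \<sigma> u)"
    by (simp add: sum.Sigma sum.inter_filter[symmetric] conj_commute)
  also have "\<dots> = (\<Sum>(\<sigma>, e)\<in>Sigma UNIV (\<lambda>\<sigma>. {e\<in>E. \<sigma> (snd e) = None \<and> \<sigma>(snd e := Some (fst e)) \<in> S}). ?w \<sigma> e)"
    by (rule sum.reindex_bij_witness[where j = "\<lambda>(\<sigma>, u). (\<sigma>(u := None), (the (\<sigma> u), u))"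
          and i = "\<lambda>(\<sigma>, e). (\<sigma>(snd e := Some (fst e)), snd e)"]) (auto simp: fun_upd_idem)
  also have "\<dots> = (\<Sum>\<sigma>\<in>UNIV. \<Sum>e\<in>{e\<in>E. \<sigma> (snd e) = None}. of_bool (\<sigma>(snd e := Some (fst e)) \<in> S) * ?w \<sigma> e)"
    by (simp add: sum.Sigma Int_def conj_assoc)
  finally have gain: "(\<Sum>\<sigma>\<in>S. \<Sum>u\<in>{u. \<sigma> u \<noteq> None}. if (the (\<sigma> u), u) \<in> E then ?G \<sigma> u else 0)
      = (\<Sum>\<sigma>\<in>UNIV. \<Sum>e\<in>{e\<in>E. \<sigma> (snd e) = None}. of_bool (\<sigma>(snd e := Some (fst e)) \<in> S) * ?w \<sigma> e)" .
  have loss: "(\<Sum>\<sigma>\<in>S. p s \<sigma> * (\<Sum>e\<in>{e\<in>E. \<sigma> (snd e) = None}. r s \<sigma> (fst e) (snd e)))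
      = (\<Sum>\<sigma>\<in>UNIV. \<Sum>e\<in>{e\<in>E. \<sigma> (snd e) = None}. of_bool (\<sigma> \<in> S) * ?w \<sigma> e)"
  proof -
    have "(\<Sum>\<sigma>\<in>UNIV. \<Sum>e\<in>{e\<in>E. \<sigma> (snd e) = None}. of_bool (\<sigma> \<in> S) * ?w \<sigma> e)
        = (\<Sum>\<sigma>\<in>UNIV. of_bool (\<sigma> \<in> S) * (p s \<sigma> * (\<Sum>e\<in>{e\<in>E. \<sigma> (snd e) = None}. r s \<sigma> (fst e) (snd e))))"
      by (simp only: sum_distrib_left mult.assoc)
    then show ?thesis by simp
  qed
  show ?thesis
    unfolding flow_def sum_subtractf gain loss by (simp add: left_diff_distrib sum_subtractf)
qed

lemma sum_flow_UNIV:
  fixes E :: "('i::finite \<times> 'j::finite) set"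
  shows "(\<Sum>\<sigma>\<in>UNIV. flow E r p s \<sigma>) = 0"
  by (simp add: sum_flow_transitions)

lemma matched_law_mass:
  fixes E :: "('i::finite \<times> 'j::finite) set"
  assumes law: "matched_law E r p" and t: "t \<in> {0..1}"
  shows "(\<Sum>\<sigma>\<in>UNIV. p t \<sigma>) = 1"
proof -
  have "((\<lambda>s. \<Sum>\<sigma>\<in>UNIV. flow E r p s \<sigma>) has_integral (\<Sum>\<sigma>\<in>UNIV. p t \<sigma> - p 0 \<sigma>)) {0..t}"
    using t by (intro has_integral_sum matched_law_has_integral[OF law]) auto
  then have "(\<Sum>\<sigma>\<in>UNIV. p t \<sigma> - p 0 \<sigma>) = 0"
    unfolding sum_flow_UNIV using has_integral_0 has_integral_unique by blast
  moreover have "(\<Sum>\<sigma>\<in>UNIV. p 0 \<sigma>) = 1"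
    by (simp add: matched_law_initial[OF law] sum.delta)
  ultimately show ?thesis by (simp add: sum_subtractf)
qed

definition edge_intensity :: "(real \<Rightarrow> ('i,'j) mstate \<Rightarrow> real)
    \<Rightarrow> (real \<Rightarrow> ('i,'j) mstate \<Rightarrow> 'i \<Rightarrow> 'j \<Rightarrow> real) \<Rightarrow> real \<Rightarrow> 'i \<Rightarrow> 'j \<Rightarrow> real" where
  "edge_intensity p r s i u = (\<Sum>\<sigma>\<in>{\<sigma>. \<sigma> u = None}. p s \<sigma> * r s \<sigma> i u)"

definition matched_prob :: "(real \<Rightarrow> ('i::finite,'j::finite) mstate \<Rightarrow> real) \<Rightarrow> 'j \<Rightarrow> real \<Rightarrow> real" where
  "matched_prob p u s = (\<Sum>\<sigma>\<in>{\<sigma>. \<sigma> u \<noteq> None}. p s \<sigma>)"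

lemma sum_flow_entered_by:
  fixes E :: "('i::finite \<times> 'j::finite) set"
  assumes entering: "\<And>\<sigma> e. e \<in> E \<Longrightarrow> \<sigma> (snd e) = None \<Longrightarrow>
      of_bool (\<sigma>(snd e := Some (fst e)) \<in> S) - of_bool (\<sigma> \<in> S) = (of_bool (e \<in> F) :: real)"
  shows "(\<Sum>\<sigma>\<in>S. flow E r p s \<sigma>) = (\<Sum>e\<in>E \<inter> F. edge_intensity p r s (fst e) (snd e))"
proof -
  have "(\<Sum>\<sigma>\<in>S. flow E r p s \<sigma>) = (\<Sum>\<sigma>\<in>UNIV. \<Sum>e\<in>{e\<in>E. \<sigma> (snd e) = None}.
      of_bool (e \<in> F) * (p s \<sigma> * r s \<sigma> (fst e) (snd e)))"
    unfolding sum_flow_transitions by (intro sum.cong refl) (simp add: entering)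
  also have "\<dots> = (\<Sum>\<sigma>\<in>UNIV. \<Sum>e\<in>{e\<in>E \<inter> F. \<sigma> (snd e) = None}. p s \<sigma> * r s \<sigma> (fst e) (snd e))"
    by (simp add: Int_def conj_ac)
  also have "\<dots> = (\<Sum>e\<in>E \<inter> F. edge_intensity p r s (fst e) (snd e))"
    unfolding edge_intensity_def by (subst sum.swap_restrict) auto
  finally show ?thesis .
qed

lemma sum_flow_matched:
  fixes E :: "('i::finite \<times> 'j::finite) set"
  shows "(\<Sum>\<sigma>\<in>{\<sigma>. \<sigma> u \<noteq> None}. flow E r p s \<sigma>) = (\<Sum>i\<in>{i. (i, u) \<in> E}. edge_intensity p r s i u)"
proof -
  have "(\<Sum>\<sigma>\<in>{\<sigma>. \<sigma> u \<noteq> None}. flow E r p s \<sigma>) = (\<Sum>e\<in>E \<inter> {e. snd e = u}. edge_intensity p r s (fst e) (snd e))"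
    by (rule sum_flow_entered_by) auto
  also have "\<dots> = (\<Sum>i\<in>{i. (i, u) \<in> E}. edge_intensity p r s i u)"
    by (rule sum.reindex_bij_witness[where i = "\<lambda>i. (i, u)" and j = fst]) auto
  finally show ?thesis .
qed

lemma sum_flow_edge:
  fixes E :: "('i::finite \<times> 'j::finite) set"
  assumes "(i, u) \<in> E"
  shows "(\<Sum>\<sigma>\<in>{\<sigma>. \<sigma> u = Some i}. flow E r p s \<sigma>) = edge_intensity p r s i u"
proof -
  have "(\<Sum>\<sigma>\<in>{\<sigma>. \<sigma> u = Some i}. flow E r p s \<sigma>) = (\<Sum>e\<in>E \<inter> {(i, u)}. edge_intensity p r s (fst e) (snd e))"
    by (rule sum_flow_entered_by) auto
  then show ?thesis using assms by simp
qed

lemma matched_prob_has_integral: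
  fixes E :: "('i::finite \<times> 'j::finite) set"
  assumes law: "matched_law E r p" and "0 \<le> a" "a \<le> b" "b \<le> 1"
  shows "((\<lambda>s. \<Sum>i\<in>{i. (i, u) \<in> E}. edge_intensity p r s i u) has_integral
           (matched_prob p u b - matched_prob p u a)) {a..b}"
proof -
  have "((\<lambda>s. \<Sum>\<sigma>\<in>{\<sigma>. \<sigma> u \<noteq> None}. flow E r p s \<sigma>) has_integral
      (\<Sum>\<sigma>\<in>{\<sigma>. \<sigma> u \<noteq> None}. p b \<sigma> - p a \<sigma>)) {a..b}"
    by (intro has_integral_sum matched_law_has_integral[OF law]) (use assms in auto)
  then show ?thesis unfolding sum_flow_matched matched_prob_def sum_subtractf .
qed

lemma matched_prob_0:
  fixes E :: "('i::finite \<times> 'j::finite) set"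
  shows "matched_law E r p \<Longrightarrow> matched_prob p u 0 = 0"
  unfolding matched_prob_def by (simp add: matched_law_initial)

lemma qedge_has_integral:
  fixes E :: "('i::finite \<times> 'j::finite) set"
  assumes law: "matched_law E r p" and "t \<in> {0..1}" "(i, u) \<in> E"
  shows "((\<lambda>s. edge_intensity p r s i u) has_integral qedge p i u t) {0..t}"
proof -
  have "((\<lambda>s. \<Sum>\<sigma>\<in>{\<sigma>. \<sigma> u = Some i}. flow E r p s \<sigma>) has_integral
      (\<Sum>\<sigma>\<in>{\<sigma>. \<sigma> u = Some i}. p t \<sigma> - p 0 \<sigma>)) {0..t}"
    by (intro has_integral_sum matched_law_has_integral[OF law]) (use assms in auto)
  moreover have "qedge p i u 0 = 0" unfolding qedge_def by (simp add: matched_law_initial[OF law])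
  ultimately show ?thesis
    unfolding sum_flow_edge[OF assms(3)] sum_subtractf by (simp add: qedge_def)
qed

lemma matched_prob_continuous:
  "matched_law E r p \<Longrightarrow> continuous_on {0..1} (matched_prob p u)"
  unfolding matched_prob_def by (intro continuous_on_sum matched_law_continuous)

lemma gboth_continuous:
  "matched_law E r p \<Longrightarrow> continuous_on {0..1} (gboth p u v)"
  unfolding gboth_def by (intro continuous_on_sum matched_law_continuous)

lemma matched_law_nonneg:
  fixes E :: "('i::finite \<times> 'j::finite) set"
  assumes law: "matched_law E r p" and "T \<le> 1"
    and rate_nonneg: "\<forall>s\<in>{0..T}. \<forall>\<sigma> i u. 0 \<le> r s \<sigma> i u"
  shows "\<forall>t\<in>{0..T}. 0 \<le> p t \<sigma>"
proof (induction "card {w. \<sigma> w \<noteq> None}" arbitrary: \<sigma> rule: less_induct)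
  case less
  have smaller_nonneg: "0 \<le> p s (\<sigma>(u := None))" if "\<sigma> u \<noteq> None" "s \<in> {0..T}" for u s
  proof -
    have "{w. (\<sigma>(u := None)) w \<noteq> None} \<subset> {w. \<sigma> w \<noteq> None}" using that by auto
    then have "card {w. (\<sigma>(u := None)) w \<noteq> None} < card {w. \<sigma> w \<noteq> None}"
      by (rule psubset_card_mono[rotated]) simp
    then show ?thesis using less that by blast
  qed
  \<comment> \<open>inflow comes from states with fewer matched vertices, whose mass is nonnegative by induction\<close>
  have flow_nonneg: "0 \<le> flow E r p s \<sigma>" if s: "s \<in> {0..T}" and "p s \<sigma> \<le> 0" for s
  proof -
    have "0 \<le> (\<Sum>e\<in>{e\<in>E. \<sigma> (snd e) = None}. r s \<sigma> (fst e) (snd e))"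
      using rate_nonneg s by (intro sum_nonneg) auto
    with \<open>p s \<sigma> \<le> 0\<close> have "p s \<sigma> * (\<Sum>e\<in>{e\<in>E. \<sigma> (snd e) = None}. r s \<sigma> (fst e) (snd e)) \<le> 0"
      by (simp add: mult_nonpos_nonneg)
    moreover have "0 \<le> (\<Sum>u\<in>{u. \<sigma> u \<noteq> None}. if (the (\<sigma> u), u) \<in> E
        then p s (\<sigma>(u := None)) * r s (\<sigma>(u := None)) (the (\<sigma> u)) u else 0)"
      using smaller_nonneg[OF _ s] rate_nonneg s by (intro sum_nonneg) auto
    ultimately show ?thesis unfolding flow_def by linarith
  qed
  show ?case
  proof (rule nonneg_if_rate_nonneg_while_negative)
    show "continuous_on {0..T} (\<lambda>t. p t \<sigma>)"
      using matched_law_continuous[OF law] by (rule continuous_on_subset) (use \<open>T \<le> 1\<close> in auto)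
    show "0 \<le> p 0 \<sigma>" using matched_law_initial[OF law, of \<sigma>] by simp
    show "((\<lambda>s. flow E r p s \<sigma>) has_integral (p b \<sigma> - p a \<sigma>)) {a..b}" if "0 \<le> a" "a \<le> b" "b \<le> T" for a b
      using that \<open>T \<le> 1\<close> by (intro matched_law_has_integral[OF law]) auto
  qed (use flow_nonneg in auto)
qed

lemma matched_law_nonneg_left_closed:
  assumes law: "matched_law E r p" and t: "t \<in> {0..1}" and below: "\<forall>s\<in>{0..<t}. 0 \<le> p s \<sigma>"
  shows "0 \<le> p t \<sigma>"
proof (cases "t = 0")
  case True
  then show ?thesis using matched_law_initial[OF law, of \<sigma>] by simp
next
  case False
  have "- p t \<sigma> \<le> 0"
    using t False below
    by (intro continuous_on_le_from_left[where g = "\<lambda>s. - p s \<sigma>"])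
      (auto intro!: continuous_intros continuous_on_subset[OF matched_law_continuous[OF law]])
  then show ?thesis by simp
qed

lemma sum_Collect_split:
  fixes f :: "'a::finite \<Rightarrow> real"
  shows "(\<Sum>x\<in>{x. P x}. f x) = (\<Sum>x\<in>{x. P x \<and> Q x}. f x) + (\<Sum>x\<in>{x. P x \<and> \<not> Q x}. f x)"
proof -
  have "{x. P x} = {x. P x \<and> Q x} \<union> {x. P x \<and> \<not> Q x}" by auto
  then show ?thesis by (simp add: sum.union_disjoint[symmetric] disjoint_iff)
qed

lemma sum_unmatched:
  fixes p :: "real \<Rightarrow> ('i::finite,'j::finite) mstate \<Rightarrow> real"
  assumes "(\<Sum>\<sigma>\<in>UNIV. p s \<sigma>) = 1"
  shows "(\<Sum>\<sigma>\<in>{\<sigma>. \<sigma> u = None}. p s \<sigma>) = 1 - matched_prob p u s"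
  using assms sum_Collect_split[where P = "\<lambda>_. True" and f = "p s" and Q = "\<lambda>\<sigma>. \<sigma> u = None"] by (simp add: matched_prob_def)

lemma gboth_commute: "gboth p u v s = gboth p v u s"
  unfolding gboth_def by (simp add: conj_commute)

lemma gboth_le_matched_prob:
  fixes p :: "real \<Rightarrow> ('i::finite,'j::finite) mstate \<Rightarrow> real"
  assumes "\<forall>\<sigma>. 0 \<le> p s \<sigma>"
  shows "gboth p u v s \<le> matched_prob p u s"
  unfolding gboth_def matched_prob_def using assms by (intro sum_mono2) auto

lemma sum_unmatched_two_rates:
  fixes p :: "real \<Rightarrow> ('i::finite,'j::finite) mstate \<Rightarrow> real"
  assumes "(\<Sum>\<sigma>\<in>UNIV. p s \<sigma>) = 1"
  shows "(\<Sum>\<sigma>\<in>{\<sigma>. \<sigma> u = None}. p s \<sigma> * (if \<sigma> v = None then c else 2 * c))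
    = c * (1 - gboth p u v s + matched_prob p v s - matched_prob p u s)"
proof -
  let ?ff = "\<Sum>\<sigma>\<in>{\<sigma>. \<sigma> u = None \<and> \<sigma> v = None}. p s \<sigma>"
  let ?fm = "\<Sum>\<sigma>\<in>{\<sigma>. \<sigma> u = None \<and> \<sigma> v \<noteq> None}. p s \<sigma>"
  have "(\<Sum>\<sigma>\<in>{\<sigma>. \<sigma> u = None}. p s \<sigma> * (if \<sigma> v = None then c else 2 * c))
      = (\<Sum>\<sigma>\<in>{\<sigma>. \<sigma> u = None \<and> \<sigma> v = None}. p s \<sigma> * (if \<sigma> v = None then c else 2 * c))
        + (\<Sum>\<sigma>\<in>{\<sigma>. \<sigma> u = None \<and> \<sigma> v \<noteq> None}. p s \<sigma> * (if \<sigma> v = None then c else 2 * c))"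
    by (rule sum_Collect_split)
  also have "(\<Sum>\<sigma>\<in>{\<sigma>. \<sigma> u = None \<and> \<sigma> v = None}. p s \<sigma> * (if \<sigma> v = None then c else 2 * c)) = c * ?ff"
    unfolding sum_distrib_left by (rule sum.cong) auto
  also have "(\<Sum>\<sigma>\<in>{\<sigma>. \<sigma> u = None \<and> \<sigma> v \<noteq> None}. p s \<sigma> * (if \<sigma> v = None then c else 2 * c)) = 2 * c * ?fm"
    unfolding sum_distrib_left by (rule sum.cong) auto
  also have "c * ?ff + 2 * c * ?fm = c * ((?ff + ?fm) + ?fm)"
    by (simp add: algebra_simps)
  also have "?ff + ?fm = 1 - matched_prob p u s"
    using sum_Collect_split[where P = "\<lambda>\<sigma>. \<sigma> u = None" and f = "p s" and Q = "\<lambda>\<sigma>. \<sigma> v = None"] sum_unmatched[of p s u, OF assms] by simp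
  also have "?fm = matched_prob p v s - gboth p u v s"
    using sum_Collect_split[where P = "\<lambda>\<sigma>. \<sigma> v \<noteq> None" and f = "p s" and Q = "\<lambda>\<sigma>. \<sigma> u = None"]
    unfolding matched_prob_def gboth_def by (simp add: conj_commute)
  finally show ?thesis by (simp add: algebra_simps)
qed

lemma edge_intensity_nonneg:
  "\<forall>\<sigma>. 0 \<le> p s \<sigma> \<Longrightarrow> \<forall>\<sigma>. 0 \<le> r s \<sigma> i u \<Longrightarrow> 0 \<le> edge_intensity p r s i u"
  unfolding edge_intensity_def by (intro sum_nonneg) auto

lemma edge_intensity_le:
  assumes "\<forall>\<sigma>. 0 \<le> p s \<sigma>" "\<forall>\<sigma>. r s \<sigma> i u \<le> K"
  shows "edge_intensity p r s i u \<le> K * (\<Sum>\<sigma>\<in>{\<sigma>. \<sigma> u = None}. p s \<sigma>)"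
  unfolding edge_intensity_def sum_distrib_left using assms
  by (intro sum_mono) (metis mult.commute mult_left_mono)

lemma matched_prob_lt_1:
  fixes E :: "('i::finite \<times> 'j::finite) set"
  assumes law: "matched_law E r p"
    and nonneg: "\<forall>t\<in>{0..1}. \<forall>\<sigma>. 0 \<le> p t \<sigma>"
    and rate_bounds: "\<forall>s\<in>{0..1}. \<forall>\<sigma> i. 0 \<le> r s \<sigma> i u \<and> r s \<sigma> i u \<le> K"
  shows "\<forall>t\<in>{0..1}. matched_prob p u t < 1"
proof -
  let ?\<rho> = "\<lambda>s. \<Sum>i\<in>{i. (i, u) \<in> E}. edge_intensity p r s i u"
  let ?K = "real (card {i. (i, u) \<in> E}) * K"
  have "0 \<le> K" using rate_bounds by (meson atLeastAtMost_iff order_trans zero_le_one order_refl)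
  have "\<forall>t\<in>{0..1}. 0 < 1 - matched_prob p u t"
  proof (rule pos_if_decay_rate_bounded[where \<rho> = ?\<rho> and K = ?K])
    show "continuous_on {0..1} (\<lambda>t. 1 - matched_prob p u t)"
      by (intro continuous_intros matched_prob_continuous[OF law])
    show "1 - matched_prob p u 0 = 1" using matched_prob_0[OF law] by simp
    show "(?\<rho> has_integral ((1 - matched_prob p u a) - (1 - matched_prob p u b))) {a..b}"
      if "0 \<le> a" "a \<le> b" "b \<le> 1" for a b
      using matched_prob_has_integral[OF law that] by simp
    show "\<forall>s\<in>{0..1}. 0 \<le> ?\<rho> s"
      using nonneg rate_bounds by (auto intro!: sum_nonneg edge_intensity_nonneg)
    show "\<forall>s\<in>{0..1}. ?\<rho> s \<le> ?K * (1 - matched_prob p u s)"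
    proof
      fix s :: real assume s: "s \<in> {0..1}"
      have "edge_intensity p r s i u \<le> K * (1 - matched_prob p u s)" for i
        using edge_intensity_le[of p s r i u K] nonneg rate_bounds s
          sum_unmatched[of p s u, OF matched_law_mass[OF law s]] by auto
      then have "?\<rho> s \<le> (\<Sum>i\<in>{i. (i, u) \<in> E}. K * (1 - matched_prob p u s))"
        by (intro sum_mono)
      then show "?\<rho> s \<le> ?K * (1 - matched_prob p u s)" by simp
    qed
    show "0 \<le> ?K" using \<open>0 \<le> K\<close> by simp
  qed
  then show ?thesis by simp
qed

section \<open>The reference process H under RES\<close>

lemma ln_2_bounds: "0 < ln (2::real)" "ln (2::real) < 1"
  using ln_2_less_1 by simp_all

lemma H_nbrs: "nbrs H_E HC = {HA, HB}" "nbrs H_E HSA = {HA}" "nbrs H_E HSB = {HB}"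
  by (auto simp: nbrs_def H_E_def)

lemma H_edges_at: "{i. (i, HA) \<in> H_E} = {HC, HSA}" "{i. (i, HB) \<in> H_E} = {HC, HSB}"
  by (auto simp: H_E_def)

lemma res_rate_H_single: "i \<noteq> HC \<Longrightarrow> res_rate H_E H_lam t0 s \<sigma> i u = 1 - ln 2"
  by (cases i) (auto simp: res_rate_def H_nbrs H_lam_def)

lemma res_rate_H_HC:
  assumes "u \<noteq> v" "\<sigma> u = None"
  shows "res_rate H_E H_lam t0 s \<sigma> HC u = (if t0 < s then (if \<sigma> v = None then ln 2 else 2 * ln 2) else 0)"
proof -
  have "{w \<in> {HA, HB}. \<sigma> w = None} = (if \<sigma> v = None then {u, v} else {u})"
    using assms by (cases u; cases v) auto
  then have "card {w \<in> {HA, HB}. \<sigma> w = None} = (if \<sigma> v = None then 2 else 1)"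
    using assms by auto
  then show ?thesis by (simp add: res_rate_def H_nbrs H_lam_def)
qed

lemma res_rate_H_bounds: "0 \<le> res_rate H_E H_lam t0 s \<sigma> i u \<and> res_rate H_E H_lam t0 s \<sigma> i u \<le> 2"
proof -
  have "0 \<le> H_lam i" "H_lam i \<le> 2"
    using ln_2_bounds by (auto simp: H_lam_def split: htype.split simp del: ln_gt_zero_iff)
  moreover have "H_lam i / real n \<le> H_lam i" for n :: nat
    using \<open>0 \<le> H_lam i\<close> by (simp add: divide_le_eq mult_le_cancel_left1)
  ultimately show ?thesis by (auto simp: res_rate_def intro: order_trans)
qed

locale res_reference =
  fixes t0 :: real and pH :: "real \<Rightarrow> (htype, hoff) mstate \<Rightarrow> real"
  assumes ref_law: "matched_law H_E (res_rate H_E H_lam t0) pH"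
begin

abbreviation rH where "rH \<equiv> res_rate H_E H_lam t0"
abbreviation fA where "fA \<equiv> matched_prob pH HA"
abbreviation fB where "fB \<equiv> matched_prob pH HB"
abbreviation gbar :: "real \<Rightarrow> real" where "gbar s \<equiv> 1 - H_g pH s"

lemma pH_nonneg: "t \<in> {0..1} \<Longrightarrow> 0 \<le> pH t \<sigma>"
  using matched_law_nonneg[OF ref_law order_refl] res_rate_H_bounds by blast

lemma pH_mass: "t \<in> {0..1} \<Longrightarrow> (\<Sum>\<sigma>\<in>UNIV. pH t \<sigma>) = 1"
  by (rule matched_law_mass[OF ref_law])

lemma fA_lt_1: "t \<in> {0..1} \<Longrightarrow> fA t < 1"
  using matched_prob_lt_1[OF ref_law _ _, of HA 2] pH_nonneg res_rate_H_bounds by blast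

lemma intensity_single:
  assumes "i \<noteq> HC" "s \<in> {0..1}"
  shows "edge_intensity pH rH s i u = (1 - ln 2) * (1 - matched_prob pH u s)"
  using sum_unmatched[of pH s u, OF pH_mass[OF assms(2)]]
  by (simp add: edge_intensity_def res_rate_H_single[OF assms(1)] sum_distrib_right[symmetric] mult.commute)

lemma intensity_HC:
  assumes "u \<noteq> v" "s \<in> {0..1}"
  shows "edge_intensity pH rH s HC u =
    (if t0 < s then ln 2 * (1 - gboth pH u v s + matched_prob pH v s - matched_prob pH u s) else 0)"
proof -
  have "edge_intensity pH rH s HC u =
      (\<Sum>\<sigma>\<in>{\<sigma>. \<sigma> u = None}. pH s \<sigma> * (if t0 < s then (if \<sigma> v = None then ln 2 else 2 * ln 2) else 0))"
    unfolding edge_intensity_def using assms(1) by (intro sum.cong) (auto simp: res_rate_H_HC)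
  then show ?thesis
    using sum_unmatched_two_rates[where p = pH and s = s and u = u and v = v and c = "ln 2", OF pH_mass[OF assms(2)]] by simp
qed

text \<open>The forward equations of H are symmetric in a and b, and fA - fB solves a linear equation
  with zero initial value.\<close>

lemma fA_eq_fB: "t \<in> {0..1} \<Longrightarrow> fA t = fB t"
proof -
  define \<rho>A where "\<rho>A s = edge_intensity pH rH s HC HA + edge_intensity pH rH s HSA HA" for s
  define \<rho>B where "\<rho>B s = edge_intensity pH rH s HC HB + edge_intensity pH rH s HSB HB" for s
  define M where "M t = \<bar>fA t - fB t\<bar>" for t
  have diff_has_integral: "((\<lambda>s. \<rho>A s - \<rho>B s) has_integral (fA t - fB t)) {0..t}" if "t \<in> {0..1}" for t
    using has_integral_diff[OF matched_prob_has_integral[OF ref_law, of 0 t HA]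
        matched_prob_has_integral[OF ref_law, of 0 t HB]] that
    by (simp add: H_edges_at \<rho>A_def \<rho>B_def matched_prob_0[OF ref_law])
  have diff_rate: "\<bar>\<rho>A s - \<rho>B s\<bar> \<le> 2 * M s" if "s \<in> {0..1}" for s
  proof -
    define c :: real where "c = (if t0 < s then 2 * ln 2 else 0) + (1 - ln 2)"
    have "\<rho>A s - \<rho>B s = - c * (fA s - fB s)"
      using that gboth_commute[of pH HA HB s] intensity_HC[of HA HB s] intensity_HC[of HB HA s]
      by (simp add: \<rho>A_def \<rho>B_def c_def intensity_single algebra_simps)
    moreover have "0 \<le> c" "c \<le> 2" using ln_2_bounds by (auto simp: c_def simp del: ln_gt_zero_iff)
    ultimately show ?thesis by (simp add: M_def abs_mult mult_right_mono)
  qed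
  have M_cont: "continuous_on {0..1} M"
    unfolding M_def by (intro continuous_intros matched_prob_continuous[OF ref_law])
  have "\<forall>t\<in>{0..1}. M t = 0"
  proof (rule integral_gronwall_zero[OF M_cont _ _])
    show "\<forall>t\<in>{0..1}. M t \<le> 2 * integral {0..t} M"
    proof
      fix t :: real assume t: "t \<in> {0..1}"
      have "M integrable_on {0..t}"
        using t by (intro integrable_continuous_interval continuous_on_subset[OF M_cont]) auto
      then have "norm (integral {0..t} (\<lambda>s. \<rho>A s - \<rho>B s)) \<le> integral {0..t} (\<lambda>s. 2 * M s)"
        using diff_has_integral[OF t] diff_rate t
        by (intro Henstock_Kurzweil_Integration.integral_norm_bound_integral integrable_on_cmult_left) auto
      then show "M t \<le> 2 * integral {0..t} M"
        using integral_unique[OF diff_has_integral[OF t]] by (simp add: M_def[abs_def])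
    qed
  qed (auto simp: M_def)
  then show "t \<in> {0..1} \<Longrightarrow> fA t = fB t" by (simp add: M_def)
qed

lemma gbar_pos:
  assumes "s \<in> {0..1}"
  shows "0 < gbar s"
proof -
  have "gboth pH HA HB s \<le> fA s" using pH_nonneg[OF assms] by (intro gboth_le_matched_prob) simp
  with fA_lt_1[OF assms] show ?thesis by (simp add: H_g_def)
qed

lemma gbar_continuous: "continuous_on {0..1} gbar"
  unfolding H_g_def by (intro continuous_intros gboth_continuous[OF ref_law])

lemma intensity_HC_HA: "s \<in> {0..1} \<Longrightarrow> edge_intensity pH rH s HC HA = (if t0 < s then ln 2 * gbar s else 0)"
  using intensity_HC[of HA HB s] fA_eq_fB[of s] by (simp add: H_g_def)

definition ref_rate :: "real \<Rightarrow> real" where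
  "ref_rate s = (1 - ln 2) * (1 - fA s) + (if t0 < s then ln 2 * gbar s else 0)"

lemma fA_has_integral:
  assumes t: "t \<in> {0..1}"
  shows "(ref_rate has_integral fA t) {0..t}"
proof -
  have "((\<lambda>s. edge_intensity pH rH s HC HA + edge_intensity pH rH s HSA HA) has_integral fA t) {0..t}"
    using matched_prob_has_integral[OF ref_law, of 0 t HA] t by (simp add: H_edges_at matched_prob_0[OF ref_law])
  then show ?thesis
    by (rule has_integral_eq[rotated]) (use t in \<open>simp add: ref_rate_def intensity_HC_HA intensity_single\<close>)
qed

lemma H_q1_has_integral:
  assumes t: "t \<in> {0..1}"
  shows "((\<lambda>s. (1 - ln 2) * (1 - fA s)) has_integral H_q1 pH t) {0..t}"
proof -
  have "(HSA, HA) \<in> H_E" by (simp add: H_E_def)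
  from qedge_has_integral[OF ref_law t this] show ?thesis unfolding H_q1_def
    by (rule has_integral_eq[rotated]) (use t in \<open>simp add: intensity_single\<close>)
qed

lemma H_q2_has_integral:
  assumes t: "t \<in> {0..1}"
  shows "((\<lambda>s. if t0 < s then ln 2 * gbar s else 0) has_integral H_q2 pH t) {0..t}"
proof -
  have "(HC, HA) \<in> H_E" by (simp add: H_E_def)
  from qedge_has_integral[OF ref_law t this] show ?thesis unfolding H_q2_def
    by (rule has_integral_eq[rotated]) (use t in \<open>simp add: intensity_HC_HA\<close>)
qed

end

section \<open>Algorithm GEN\<close>

locale gen_process = res_reference +
  fixes E :: "('i::finite \<times> 'j::finite) set"
    and lam :: "'i \<Rightarrow> real"
    and x :: "'i \<Rightarrow> 'j \<Rightarrow> real"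
    and fcl :: "'i \<times> 'j \<Rightarrow> bool"
    and p :: "real \<Rightarrow> ('i, 'j) mstate \<Rightarrow> real"
  assumes lam_pos: "\<forall>i. lam i > 0"
    and x_off: "\<forall>i j. (i, j) \<notin> E \<longrightarrow> x i j = 0"
    and x_sum: "\<forall>j. (\<Sum>i\<in>UNIV. x i j) = 1"
    and classes: "\<forall>i. (card (nbrs E i) = 1 \<and> (\<forall>j\<in>nbrs E i. x i j = lam i))
                     \<or> (card (nbrs E i) = 2 \<and> (\<forall>j\<in>nbrs E i. x i j = lam i / 2))"
    and label_first: "\<forall>i j. (i, j) \<in> E \<and> card (nbrs E i) = 1 \<longrightarrow> fcl (i, j)"
    and label_sum: "\<forall>j. (\<Sum>i\<in>{i. (i, j) \<in> E \<and> fcl (i, j)}. x i j) = 1 - ln 2"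
    and gen_law: "matched_law E (gen_rate E lam fcl t0 (\<lambda>s. 1 - H_g pH s) p) p"
begin

abbreviation rG where "rG \<equiv> gen_rate E lam fcl t0 gbar p"

lemma x_pos: "(i, u) \<in> E \<Longrightarrow> 0 < x i u"
  using classes lam_pos by (fastforce simp: nbrs_def)

lemma first_class_rate: "(i, u) \<in> E \<Longrightarrow> fcl (i, u) \<Longrightarrow> rG s \<sigma> i u = x i u"
  using classes by (fastforce simp: gen_rate_def nbrs_def)

lemma second_class_x: "(i, u) \<in> E \<Longrightarrow> \<not> fcl (i, u) \<Longrightarrow> card (nbrs E i) \<noteq> 1 \<and> x i u = lam i / 2"
  using classes label_first by (fastforce simp: nbrs_def)

lemma second_class_rate:
  assumes "(i, u) \<in> E" "\<not> fcl (i, u)" "v = other E i u" "c = x i u * gbar s / (1 - gboth p u v s)"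
  shows "rG s \<sigma> i u = (if t0 < s then (if \<sigma> v = None then c else 2 * c) else 0)"
proof -
  have "lam i = 2 * x i u" "card (nbrs E i) \<noteq> 1" using second_class_x[OF assms(1,2)] by auto
  moreover have "2 * a * g / (2 - 2 * b) = a * g / (1 - b)" for a g b :: real
    by (metis mult.assoc mult_divide_mult_cancel_left_if right_diff_distrib' mult.right_neutral zero_neq_numeral)
  ultimately show ?thesis using assms(2-4) by (simp add: gen_rate_def Let_def)
qed

lemma gen_mass: "s \<in> {0..1} \<Longrightarrow> (\<Sum>\<sigma>\<in>UNIV. p s \<sigma>) = 1"
  by (rule matched_law_mass[OF gen_law])

lemma first_class_intensity:
  assumes "s \<in> {0..1}" "(i, u) \<in> E" "fcl (i, u)"
  shows "edge_intensity p rG s i u = x i u * (1 - matched_prob p u s)"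
  using sum_unmatched[of p s u, OF gen_mass[OF assms(1)]]
  by (simp add: edge_intensity_def first_class_rate[OF assms(2,3)] sum_distrib_right[symmetric] mult.commute)

lemma second_class_intensity:
  assumes "s \<in> {0..1}" "(i, u) \<in> E" "\<not> fcl (i, u)" "v = other E i u"
  shows "edge_intensity p rG s i u = (if t0 < s then x i u * gbar s / (1 - gboth p u v s)
      * (1 - gboth p u v s + matched_prob p v s - matched_prob p u s) else 0)"
proof -
  define c where "c = x i u * gbar s / (1 - gboth p u v s)"
  have "edge_intensity p rG s i u
      = (\<Sum>\<sigma>\<in>{\<sigma>. \<sigma> u = None}. p s \<sigma> * (if t0 < s then (if \<sigma> v = None then c else 2 * c) else 0))"
    unfolding edge_intensity_def using second_class_rate[OF assms(2-4) c_def] by simp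
  then show ?thesis
    using sum_unmatched_two_rates[where p = p and s = s and u = u and v = v and c = c, OF gen_mass[OF assms(1)]]
    by (simp add: c_def)
qed

text \<open>Since division by 0 yields 0, rates stay nonnegative even when some gboth p u v s reaches 1.\<close>

lemma gen_rate_nonneg:
  assumes "s \<in> {0..1}" "\<forall>u v. gboth p u v s \<le> 1"
  shows "0 \<le> rG s \<sigma> i u"
  using assms gbar_pos[OF assms(1)] lam_pos
  by (auto simp: gen_rate_def Let_def less_imp_le intro!: mult_nonneg_nonneg divide_nonneg_nonneg)

lemma sum_x_at: "(\<Sum>i\<in>{i. (i, u) \<in> E}. x i u) = 1"
  using x_sum x_off sum_Collect_split[where P = "\<lambda>_. True" and f = "\<lambda>i. x i u" and Q = "\<lambda>i. (i, u) \<in> E"]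
  by simp

lemma sum_x_second_class: "(\<Sum>i\<in>{i. (i, u) \<in> E \<and> \<not> fcl (i, u)}. x i u) = ln 2"
  using sum_x_at[of u] label_sum
    sum_Collect_split[where P = "\<lambda>i. (i, u) \<in> E" and f = "\<lambda>i. x i u" and Q = "\<lambda>i. fcl (i, u)"]
  by simp

text \<open>The intensity an edge of GEN would have if every offline vertex were matched with the
  probability fA of the reference process.\<close>

definition ref_intensity :: "'i \<Rightarrow> 'j \<Rightarrow> real \<Rightarrow> real" where
  "ref_intensity i u s =
     (if fcl (i, u) then x i u * (1 - fA s) else if t0 < s then x i u * gbar s else 0)"

lemma sum_ref_intensity: "(\<Sum>i\<in>{i. (i, u) \<in> E}. ref_intensity i u s) = ref_rate s"
proof -
  have "(\<Sum>i\<in>{i. (i, u) \<in> E}. ref_intensity i u s)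
      = (\<Sum>i\<in>{i. (i, u) \<in> E \<and> fcl (i, u)}. x i u) * (1 - fA s)
        + (\<Sum>i\<in>{i. (i, u) \<in> E \<and> \<not> fcl (i, u)}. x i u) * (if t0 < s then gbar s else 0)"
    unfolding sum_distrib_right
    by (subst sum_Collect_split[where Q = "\<lambda>i. fcl (i, u)"], intro arg_cong2[where f = "(+)"] sum.cong)
      (auto simp: ref_intensity_def)
  then show ?thesis by (simp add: label_sum sum_x_second_class ref_rate_def mult.commute)
qed

lemma intensity_deviation:
  assumes s: "s \<in> {0..1}" and iu: "(i, u) \<in> E" and v: "v = other E i u" and "gboth p u v s \<noteq> 1"
    and ratio: "\<bar>gbar s / (1 - gboth p u v s)\<bar> \<le> B"
    and dev: "\<forall>w. \<bar>matched_prob p w s - fA s\<bar> \<le> D"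
  shows "\<bar>edge_intensity p rG s i u - ref_intensity i u s\<bar> \<le> x i u * ((1 + 2 * B) * D)"
proof -
  let ?dev = "edge_intensity p rG s i u - ref_intensity i u s"
  have "0 \<le> x i u" using x_pos[OF iu] by simp
  have "0 \<le> B" "0 \<le> D" using ratio dev abs_ge_zero order_trans by blast+
  then have "0 \<le> x i u * D" "0 \<le> x i u * (2 * B * D)" using \<open>0 \<le> x i u\<close> by simp_all
  consider "fcl (i, u)" | "\<not> fcl (i, u)" "t0 < s" | "\<not> fcl (i, u)" "\<not> t0 < s" by blast
  then have "\<bar>?dev\<bar> \<le> x i u * D + x i u * (2 * B * D)"
  proof cases
    case 1
    then have "?dev = x i u * (fA s - matched_prob p u s)"
      by (simp add: first_class_intensity[OF s iu] ref_intensity_def algebra_simps)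
    then have "\<bar>?dev\<bar> = x i u * \<bar>matched_prob p u s - fA s\<bar>"
      using \<open>0 \<le> x i u\<close> by (simp add: abs_mult abs_minus_commute)
    also have "\<dots> \<le> x i u * D" using dev \<open>0 \<le> x i u\<close> by (simp add: mult_left_mono)
    finally show ?thesis using \<open>0 \<le> x i u * (2 * B * D)\<close> by linarith
  next
    case 2
    have "?dev = x i u * (gbar s / (1 - gboth p u v s)) * ((matched_prob p v s - fA s) - (matched_prob p u s - fA s))"
      using 2 \<open>gboth p u v s \<noteq> 1\<close>
      by (simp add: second_class_intensity[OF s iu _ v] ref_intensity_def field_simps)
    also have "\<bar>\<dots>\<bar> \<le> x i u * B * (D + D)"
      unfolding abs_mult using ratio dev[rule_format, of u] dev[rule_format, of v] \<open>0 \<le> x i u\<close> \<open>0 \<le> B\<close>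
      by (intro mult_mono) auto
    finally show ?thesis using \<open>0 \<le> x i u * D\<close> by (simp add: algebra_simps)
  next
    case 3
    then show ?thesis
      using \<open>0 \<le> x i u * D\<close> \<open>0 \<le> x i u * (2 * B * D)\<close>
      by (simp add: second_class_intensity[OF s iu _ v] ref_intensity_def)
  qed
  then show ?thesis by (simp add: algebra_simps)
qed

lemma matched_rate_deviation:
  assumes s: "s \<in> {0..1}" and "\<forall>u v. gboth p u v s \<noteq> 1"
    and ratio: "\<forall>u v. \<bar>gbar s / (1 - gboth p u v s)\<bar> \<le> B"
    and dev: "\<forall>w. \<bar>matched_prob p w s - fA s\<bar> \<le> D"
  shows "\<bar>(\<Sum>i\<in>{i. (i, u) \<in> E}. edge_intensity p rG s i u) - ref_rate s\<bar> \<le> (1 + 2 * B) * D"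
proof -
  have "\<bar>(\<Sum>i\<in>{i. (i, u) \<in> E}. edge_intensity p rG s i u) - ref_rate s\<bar>
      = \<bar>\<Sum>i\<in>{i. (i, u) \<in> E}. edge_intensity p rG s i u - ref_intensity i u s\<bar>"
    by (simp add: sum_subtractf sum_ref_intensity)
  also have "\<dots> \<le> (\<Sum>i\<in>{i. (i, u) \<in> E}. \<bar>edge_intensity p rG s i u - ref_intensity i u s\<bar>)"
    by (rule sum_abs)
  also have "\<dots> \<le> (\<Sum>i\<in>{i. (i, u) \<in> E}. x i u * ((1 + 2 * B) * D))"
    using assms by (intro sum_mono intensity_deviation[OF s _ refl]) auto
  also have "\<dots> = (1 + 2 * B) * D"
    by (simp add: sum_distrib_right[symmetric] sum_x_at)
  finally show ?thesis .
qed

lemma intensity_ratio_bounded: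
  assumes "T \<le> 1" "\<forall>s\<in>{0..T}. \<forall>u v. gboth p u v s < 1"
  obtains B where "0 \<le> B" "\<forall>s\<in>{0..T}. \<forall>u v. \<bar>gbar s / (1 - gboth p u v s)\<bar> \<le> B"
proof -
  define \<Phi> where "\<Phi> s = (\<Sum>uv\<in>UNIV. \<bar>gbar s / (1 - gboth p (fst uv) (snd uv) s)\<bar>)" for s
  have sub: "{0..T} \<subseteq> {0..1}" using assms(1) by auto
  have gbar_T: "continuous_on {0..T} gbar" using gbar_continuous sub by (rule continuous_on_subset)
  have "continuous_on {0..T} (\<lambda>s. 1 - gboth p u v s)" for u v
    by (intro continuous_intros continuous_on_subset[OF gboth_continuous[OF gen_law] sub])
  moreover have "1 - gboth p u v s \<noteq> 0" if "s \<in> {0..T}" for s u v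
    using assms(2) that by (metis less_irrefl right_minus_eq)
  ultimately have "continuous_on {0..T} \<Phi>"
    unfolding \<Phi>_def by (intro continuous_on_sum continuous_on_rabs continuous_on_divide gbar_T) auto
  then have "bounded (\<Phi> ` {0..T})"
    by (intro compact_imp_bounded compact_continuous_image) auto
  then obtain B where B: "\<forall>s\<in>{0..T}. \<bar>\<Phi> s\<bar> \<le> B" unfolding bounded_real by blast
  have "\<bar>gbar s / (1 - gboth p u v s)\<bar> \<le> \<Phi> s" for s u v
    unfolding \<Phi>_def using member_le_sum[of "(u, v)" UNIV "\<lambda>uv. \<bar>gbar s / (1 - gboth p (fst uv) (snd uv) s)\<bar>"]
    by simp
  with B have "\<forall>s\<in>{0..T}. \<forall>u v. \<bar>gbar s / (1 - gboth p u v s)\<bar> \<le> max 0 B"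
    by (meson abs_ge_self max.coboundedI2 order_trans)
  then show ?thesis by (intro that[of "max 0 B"]) auto
qed

definition matched_deviation :: "real \<Rightarrow> real" where
  "matched_deviation t = (\<Sum>w\<in>UNIV. \<bar>matched_prob p w t - fA t\<bar>)"

lemma matched_deviation_continuous: "continuous_on {0..1} matched_deviation"
  unfolding matched_deviation_def
  by (intro continuous_intros matched_prob_continuous[OF gen_law] matched_prob_continuous[OF ref_law])

lemma matched_prob_deviation_le:
  assumes "T \<le> 1" "t \<in> {0..T}" and below_1: "\<forall>s\<in>{0..T}. \<forall>u v. gboth p u v s < 1"
    and ratio: "\<forall>s\<in>{0..T}. \<forall>u v. \<bar>gbar s / (1 - gboth p u v s)\<bar> \<le> B"
  shows "\<bar>matched_prob p u t - fA t\<bar> \<le> (1 + 2 * B) * integral {0..t} matched_deviation"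
proof -
  let ?\<rho> = "\<lambda>s. (\<Sum>i\<in>{i. (i, u) \<in> E}. edge_intensity p rG s i u) - ref_rate s"
  have t: "t \<in> {0..1}" using assms(1,2) by auto
  have "(?\<rho> has_integral (matched_prob p u t - fA t)) {0..t}"
    using has_integral_diff[OF matched_prob_has_integral[OF gen_law, of 0 t u] fA_has_integral[OF t]] t
    by (simp add: matched_prob_0[OF gen_law])
  moreover have "norm (integral {0..t} ?\<rho>) \<le> integral {0..t} (\<lambda>s. (1 + 2 * B) * matched_deviation s)"
  proof (rule Henstock_Kurzweil_Integration.integral_norm_bound_integral)
    show "?\<rho> integrable_on {0..t}" using calculation by blast
    show "(\<lambda>s. (1 + 2 * B) * matched_deviation s) integrable_on {0..t}"
      using t by (intro integrable_on_mult_right integrable_continuous_interval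
          continuous_on_subset[OF matched_deviation_continuous]) auto
    show "norm (?\<rho> s) \<le> (1 + 2 * B) * matched_deviation s" if "s \<in> {0..t}" for s
    proof -
      have s: "s \<in> {0..1}" "s \<in> {0..T}" using that assms(1,2) by auto
      have "\<forall>u v. gboth p u v s \<noteq> 1" using below_1 s(2) by (metis less_irrefl)
      moreover have "\<forall>u v. \<bar>gbar s / (1 - gboth p u v s)\<bar> \<le> B" using ratio s(2) by blast
      moreover have "\<forall>w. \<bar>matched_prob p w s - fA s\<bar> \<le> matched_deviation s"
        unfolding matched_deviation_def by (auto intro: member_le_sum)
      ultimately show ?thesis unfolding real_norm_def by (rule matched_rate_deviation[OF s(1)])
    qed
  qed
  ultimately show ?thesis by (simp add: integral_unique)
qed

lemma matched_prob_eq_fA: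
  assumes "T \<le> 1" and below_1: "\<forall>s\<in>{0..T}. \<forall>u v. gboth p u v s < 1"
  shows "\<forall>t\<in>{0..T}. \<forall>u. matched_prob p u t = fA t"
proof -
  obtain B where "0 \<le> B" and ratio: "\<forall>s\<in>{0..T}. \<forall>u v. \<bar>gbar s / (1 - gboth p u v s)\<bar> \<le> B"
    using intensity_ratio_bounded[OF assms] by blast
  have "\<forall>t\<in>{0..T}. matched_deviation t = 0"
  proof (rule integral_gronwall_zero)
    show "continuous_on {0..T} matched_deviation"
      using matched_deviation_continuous by (rule continuous_on_subset) (use \<open>T \<le> 1\<close> in auto)
    show "\<forall>t\<in>{0..T}. matched_deviation t \<le> real CARD('j) * (1 + 2 * B) * integral {0..t} matched_deviation"
    proof
      fix t assume "t \<in> {0..T}"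
      then have "matched_deviation t \<le> (\<Sum>w\<in>(UNIV :: 'j set). (1 + 2 * B) * integral {0..t} matched_deviation)"
        unfolding matched_deviation_def[of t] using assms ratio by (intro sum_mono matched_prob_deviation_le)
      then show "matched_deviation t \<le> real CARD('j) * (1 + 2 * B) * integral {0..t} matched_deviation"
        by simp
    qed
  qed (use \<open>0 \<le> B\<close> in \<open>auto simp: matched_deviation_def intro: sum_nonneg\<close>)
  then show ?thesis
    unfolding matched_deviation_def by (simp add: sum_nonneg_eq_0_iff)
qed

lemma matched_prob_eq_fA_left_closed:
  assumes t: "t \<in> {0..1}" and below_1: "\<forall>s\<in>{0..<t}. \<forall>u v. gboth p u v s < 1"
  shows "matched_prob p u t = fA t"
proof (cases "t = 0")
  case True
  then show ?thesis using matched_prob_0[OF gen_law] matched_prob_0[OF ref_law] by simp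
next
  case False
  have eq_before: "\<forall>s\<in>{0..<t}. matched_prob p u s - fA s = 0"
  proof
    fix s assume s: "s \<in> {0..<t}"
    then have "\<forall>s'\<in>{0..s}. \<forall>u v. gboth p u v s' < 1" using below_1 by auto
    then show "matched_prob p u s - fA s = 0" using matched_prob_eq_fA[of s] s t by auto
  qed
  have cont: "continuous_on {0..t} (\<lambda>s. matched_prob p u s - fA s)"
    using t by (intro continuous_intros continuous_on_subset[OF matched_prob_continuous[OF gen_law]]
        continuous_on_subset[OF matched_prob_continuous[OF ref_law]]) auto
  have "matched_prob p u t - fA t \<le> 0"
    by (rule continuous_on_le_from_left[OF cont]) (use False t eq_before in auto)
  moreover have "- (matched_prob p u t - fA t) \<le> 0"
    by (rule continuous_on_le_from_left[OF continuous_on_minus[OF cont]]) (use False t eq_before in auto)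
  ultimately show ?thesis by simp
qed

lemma gboth_lt_1_nhd:
  assumes t: "t \<in> {0..1}" and "\<forall>u v. gboth p u v t < 1"
  obtains e where "0 < e" "\<forall>s\<in>{0..1}. \<bar>s - t\<bar> < e \<longrightarrow> (\<forall>u v. gboth p u v s < 1)"
proof -
  have "\<forall>\<^sub>F s in at t within {0..1}. \<forall>uv :: 'j \<times> 'j. gboth p (fst uv) (snd uv) s < 1"
  proof (rule eventually_all_finite)
    fix uv :: "'j \<times> 'j"
    have "(gboth p (fst uv) (snd uv) \<longlongrightarrow> gboth p (fst uv) (snd uv) t) (at t within {0..1})"
      using gboth_continuous[OF gen_law] t unfolding continuous_on_def by blast
    from order_tendstoD(2)[OF this] assms(2)
    show "\<forall>\<^sub>F s in at t within {0..1}. gboth p (fst uv) (snd uv) s < 1" by blast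
  qed
  then obtain e where "0 < e"
    and near_t: "\<forall>s\<in>{0..1}. s \<noteq> t \<and> dist s t < e \<longrightarrow> (\<forall>uv :: 'j \<times> 'j. gboth p (fst uv) (snd uv) s < 1)"
    unfolding eventually_at by blast
  have "\<forall>s\<in>{0..1}. \<bar>s - t\<bar> < e \<longrightarrow> (\<forall>u v. gboth p u v s < 1)"
    using near_t assms(2) by (force simp: dist_real_def)
  with \<open>0 < e\<close> show ?thesis by (rule that)
qed

definition regular :: "real \<Rightarrow> bool" where
  "regular s \<longleftrightarrow> (\<forall>\<sigma>. 0 \<le> p s \<sigma>) \<and> (\<forall>u v. gboth p u v s < 1)"

text \<open>Nonnegativity of the law and gboth < 1 depend on each other (the rates of GEN are nonnegative
  only while gboth \<le> 1), so both are propagated together by real induction: at the first failure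
  time t, the matched probabilities still equal fA t, which forces gboth < 1 near t.\<close>

lemma regular_everywhere: "\<forall>s\<in>{0..1}. regular s"
proof (rule real_induct_Icc)
  fix t :: real assume t: "t \<in> {0..1}" and below: "\<forall>s\<in>{0..<t}. regular s"
  have "0 \<le> p t \<sigma>" for \<sigma>
    using matched_law_nonneg_left_closed[OF gen_law t] below by (simp add: regular_def)
  moreover have "matched_prob p u t = fA t" for u
    using matched_prob_eq_fA_left_closed[OF t] below by (simp add: regular_def)
  ultimately have "gboth p u v t < 1" for u v
    using gboth_le_matched_prob[of p t u v] fA_lt_1[OF t] by simp
  then obtain e where "0 < e" and near_t: "\<forall>s\<in>{0..1}. \<bar>s - t\<bar> < e \<longrightarrow> (\<forall>u v. gboth p u v s < 1)"
    using gboth_lt_1_nhd[OF t] by blast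
  have below_1: "\<forall>u v. gboth p u v s < 1" if "s \<in> {0..1}" "s < t + e" for s
    using below near_t that by (cases "s < t") (auto simp: regular_def)
  have "regular s" if s: "s \<in> {0..1}" "s < t + e" for s
  proof -
    have "\<forall>s'\<in>{0..s}. \<forall>\<sigma> i u. 0 \<le> rG s' \<sigma> i u"
      using below_1 s by (auto intro!: gen_rate_nonneg simp: less_imp_le)
    then have "\<forall>s'\<in>{0..s}. 0 \<le> p s' \<sigma>" for \<sigma>
      using s by (intro matched_law_nonneg[OF gen_law]) auto
    then show ?thesis using below_1[OF s] s by (auto simp: regular_def)
  qed
  with \<open>0 < e\<close> show "\<exists>e>0. \<forall>s\<in>{0..1}. s < t + e \<longrightarrow> regular s" by blast
qed

lemma qedge_has_ref_integral:
  assumes t: "t \<in> {0..1}" and iu: "(i, u) \<in> E"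
  shows "((\<lambda>s. ref_intensity i u s) has_integral qedge p i u t) {0..t}"
  using qedge_has_integral[OF gen_law t iu]
proof (rule has_integral_eq[rotated])
  fix s assume "s \<in> {0..t}"
  then have s: "s \<in> {0..1}" using t by auto
  have "matched_prob p w s = fA s" for w
    using matched_prob_eq_fA[OF order_refl] regular_everywhere s by (auto simp: regular_def)
  moreover have "gboth p u (other E i u) s < 1"
    using regular_everywhere s unfolding regular_def by blast
  ultimately show "edge_intensity p rG s i u = ref_intensity i u s"
    by (cases "fcl (i, u)")
      (simp_all add: first_class_intensity[OF s iu] second_class_intensity[OF s iu _ refl] ref_intensity_def)
qed

lemma first_class_qedge:
  assumes t: "t \<in> {0..1}" and iu: "(i, u) \<in> E" and "fcl (i, u)"
  shows "qedge p i u t / x i u = H_q1 pH t / (1 - ln 2)"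
proof -
  have "1 - ln 2 \<noteq> (0::real)" using ln_2_bounds by simp
  have "((\<lambda>s. x i u / (1 - ln 2) * ((1 - ln 2) * (1 - fA s))) has_integral x i u / (1 - ln 2) * H_q1 pH t) {0..t}"
    by (rule has_integral_mult_right[OF H_q1_has_integral[OF t]])
  moreover have "((\<lambda>s. x i u / (1 - ln 2) * ((1 - ln 2) * (1 - fA s))) has_integral qedge p i u t) {0..t}"
    using qedge_has_ref_integral[OF t iu]
    by (rule has_integral_eq[rotated]) (use \<open>fcl (i, u)\<close> \<open>1 - ln 2 \<noteq> 0\<close> in \<open>simp add: ref_intensity_def\<close>)
  ultimately have "qedge p i u t = x i u / (1 - ln 2) * H_q1 pH t" by (rule has_integral_unique[symmetric])
  then show ?thesis using x_pos[OF iu] \<open>1 - ln 2 \<noteq> 0\<close> by (simp add: field_simps)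
qed

lemma second_class_qedge:
  assumes t: "t \<in> {0..1}" and iu: "(i, u) \<in> E" and "\<not> fcl (i, u)"
  shows "qedge p i u t / x i u = H_q2 pH t / ln 2"
proof -
  have "ln 2 \<noteq> (0::real)" using ln_2_bounds by simp
  have "((\<lambda>s. x i u / ln 2 * (if t0 < s then ln 2 * gbar s else 0)) has_integral x i u / ln 2 * H_q2 pH t) {0..t}"
    by (rule has_integral_mult_right[OF H_q2_has_integral[OF t]])
  moreover have "((\<lambda>s. x i u / ln 2 * (if t0 < s then ln 2 * gbar s else 0)) has_integral qedge p i u t) {0..t}"
    using qedge_has_ref_integral[OF t iu]
    by (rule has_integral_eq[rotated]) (use \<open>\<not> fcl (i, u)\<close> \<open>ln 2 \<noteq> 0\<close> in \<open>simp add: ref_intensity_def\<close>)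
  ultimately have "qedge p i u t = x i u / ln 2 * H_q2 pH t" by (rule has_integral_unique[symmetric])
  then show ?thesis using x_pos[OF iu] \<open>ln 2 \<noteq> 0\<close> by (simp add: field_simps)
qed

end

theorem lemma4p10:
  fixes E :: "('i::finite \<times> 'j::finite) set"
    and lam :: "'i \<Rightarrow> real"
    and x :: "'i \<Rightarrow> 'j \<Rightarrow> real"
    and fcl :: "'i \<times> 'j \<Rightarrow> bool"
    and t0 :: real
    and pH :: "real \<Rightarrow> (htype, hoff) mstate \<Rightarrow> real"
    and p :: "real \<Rightarrow> ('i, 'j) mstate \<Rightarrow> real"
  assumes lam_pos: "\<forall>i. lam i > 0"
    and x_nonneg: "\<forall>i j. x i j \<ge> 0"
    and x_off: "\<forall>i j. (i, j) \<notin> E \<longrightarrow> x i j = 0"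
    and x_sum: "\<forall>j. (\<Sum>i\<in>UNIV. x i j) = 1"
    and classes: "\<forall>i. (card (nbrs E i) = 1 \<and> (\<forall>j\<in>nbrs E i. x i j = lam i))
                     \<or> (card (nbrs E i) = 2 \<and> (\<forall>j\<in>nbrs E i. x i j = lam i / 2))"
    and label_first: "\<forall>i j. (i, j) \<in> E \<and> card (nbrs E i) = 1 \<longrightarrow> fcl (i, j)"
    and label_sum: "\<forall>j. (\<Sum>i\<in>{i. (i, j) \<in> E \<and> fcl (i, j)}. x i j) = 1 - ln 2"
    and ref_law: "matched_law H_E (res_rate H_E H_lam t0) pH"
    and gen_law: "matched_law E (gen_rate E lam fcl t0 (\<lambda>s. 1 - H_g pH s) p) p"
  shows "\<forall>t\<in>{0..1}. \<forall>i u. (i, u) \<in> E \<longrightarrow>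
           (fcl (i, u) \<longrightarrow> qedge p i u t / x i u = H_q1 pH t / (1 - ln 2)) \<and>
           (\<not> fcl (i, u) \<longrightarrow> qedge p i u t / x i u = H_q2 pH t / ln 2)"
proof -
  interpret gen_process t0 pH E lam x fcl p
    by unfold_locales (fact ref_law lam_pos x_off x_sum classes label_first label_sum gen_law)+
  show ?thesis using first_class_qedge second_class_qedge by blast
qed

end
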